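(* Let $c,u,d>0$ be constants and let $s,\alpha>0$. Then there exist $S>0$ and smooth functions $f,g\colon[-s,S+s]\to\mathbb{R}$ such that: (i) for $t\in[-s,0]$, $f(t)=ut+c$ and $g(t)=-dt-c$; (ii) for $t\in[S,S+s]$, $f(t)=-d(t-S)+c$ and $g(t)=u(t-S)-c$; (iii) for all $t$, $|f'(t)|\le\max(u,d)$ and $|g'(t)|\le\max(u,d)$; (iv) the total curvatures of the holonomic curves $t\mapsto(f(t),f'(t),f''(t))$ and $t\mapsto(g(t),g'(t),g''(t))$ are each smaller than $\pi+\alpha$.
   Context: For a space curve with continuous unit tangent vector, its total curvature is the length on the unit sphere $\mathbb{S}^2$ of the curve traced by the unit tangent vector (Milnor's total curvature). *)

theory Defs
  imports "HOL-Analysis.Analysis"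
begin

definition smooth_fun :: "(real \<Rightarrow> real) \<Rightarrow> bool" where
  "smooth_fun f \<longleftrightarrow> (\<forall>k x. ((deriv ^^ k) f) differentiable (at x))"

text \<open>Length of a curve on [a,b]: supremum of lengths of inscribed polygons (valued in ereal,
  so that non-rectifiable curves get length infinity).\<close>
definition curve_length :: "(real \<Rightarrow> 'a::metric_space) \<Rightarrow> real \<Rightarrow> real \<Rightarrow> ereal" where
  "curve_length \<gamma> a b =
     (SUP p \<in> {(n, t). t 0 = a \<and> t n = b \<and> (\<forall>i<n. t i \<le> t (Suc i))}.
        ereal (\<Sum>i<fst p. dist (\<gamma> (snd p i)) (\<gamma> (snd p (Suc i)))))"

definition regular_curve_on :: "(real \<Rightarrow> real^3) \<Rightarrow> real \<Rightarrow> real \<Rightarrow> bool" where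
  "regular_curve_on \<gamma> a b \<longleftrightarrow>
     (\<forall>t\<in>{a..b}. \<gamma> differentiable (at t) \<and> vector_derivative \<gamma> (at t) \<noteq> 0)"

definition unit_tangent :: "(real \<Rightarrow> real^3) \<Rightarrow> real \<Rightarrow> real^3" where
  "unit_tangent \<gamma> t = vector_derivative \<gamma> (at t) /\<^sub>R norm (vector_derivative \<gamma> (at t))"

text \<open>Milnor total curvature: length on the unit sphere of the unit tangent indicatrix.\<close>
definition total_curvature :: "(real \<Rightarrow> real^3) \<Rightarrow> real \<Rightarrow> real \<Rightarrow> ereal" where
  "total_curvature \<gamma> a b = curve_length (unit_tangent \<gamma>) a b"

definition holonomic :: "(real \<Rightarrow> real) \<Rightarrow> real \<Rightarrow> real^3" where
  "holonomic f t = vector [f t, deriv f t, deriv (deriv f) t]"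

end

theory Submission
  imports Defs "HOL-Computational_Algebra.Polynomial"
begin

(* The slope f' is t \<mapsto> P (e * t + k) for a fixed smooth profile P that equals u on the
   left, -d on the right, and -y near its only zero y = 0. The unit tangent of the holonomic
   curve (f, f', f'') is then the normalization of (P, e P', e\<^sup>2 P'') at y = e * t + k. Where
   P does not vanish it moves with speed O(e) in y, while near y = 0 it is the normalization
   of (-y, -e, 0), which runs through an arc of a great circle of angle less than pi. Hence a
   small e makes the total curvature less than pi + alpha. Finally f is the antiderivative of
   the slope through (0, c), S is where f returns to c, and g t = - f (S - t). *)

section \<open>Smooth functions\<close>

definition times_differentiable :: "nat \<Rightarrow> (real \<Rightarrow> real) \<Rightarrow> bool" where
  "times_differentiable n f \<longleftrightarrow> (\<forall>k<n. \<forall>x. ((deriv ^^ k) f) differentiable (at x))"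

lemma smooth_fun_iff_times_differentiable: "smooth_fun f \<longleftrightarrow> (\<forall>n. times_differentiable n f)"
  unfolding smooth_fun_def times_differentiable_def by (meson lessI)

lemma times_differentiable_0 [simp]: "times_differentiable 0 f"
  by (simp add: times_differentiable_def)

lemma times_differentiable_Suc:
  "times_differentiable (Suc n) f \<longleftrightarrow> (\<forall>x. f differentiable (at x)) \<and> times_differentiable n (deriv f)"
proof -
  have "(deriv ^^ Suc k) f = (deriv ^^ k) (deriv f)" for k
    by (simp add: funpow_Suc_right del: funpow.simps)
  moreover have "(\<forall>k<Suc n. P k) \<longleftrightarrow> P 0 \<and> (\<forall>k<n. P (Suc k))" for P
    using less_Suc_eq_0_disj by auto
  ultimately show ?thesis unfolding times_differentiable_def by simp
qed

lemma times_differentiable_SucD: "times_differentiable (Suc n) f \<Longrightarrow> times_differentiable n f"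
  by (simp add: times_differentiable_def)

lemma deriv_eqI: "(\<And>x. (f has_real_derivative g x) (at x)) \<Longrightarrow> deriv f = g"
  using DERIV_imp_deriv by blast

lemma times_differentiable_has_real_derivative:
  "times_differentiable (Suc n) f \<Longrightarrow> (f has_real_derivative deriv f x) (at x)"
  by (simp add: times_differentiable_Suc DERIV_deriv_iff_real_differentiable)

lemma has_real_derivative_affine_comp:
  assumes "(f has_real_derivative D) (at (a * x + b))"
  shows "((\<lambda>x. f (a * x + b)) has_real_derivative a * D) (at x)"
proof -
  have "((\<lambda>x. a * x + b) has_real_derivative a) (at x)"
    by (auto intro!: derivative_eq_intros)
  from DERIV_chain2[OF assms this] show ?thesis by (simp add: mult.commute)
qed

lemma times_differentiable_const: "times_differentiable n (\<lambda>x. c)"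
proof (induction n arbitrary: c)
  case (Suc n)
  have "deriv (\<lambda>x. c) = (\<lambda>x. 0)" by (rule deriv_eqI) auto
  then show ?case using Suc by (simp add: times_differentiable_Suc)
qed simp

lemma times_differentiable_ident: "times_differentiable n (\<lambda>x. x)"
proof (cases n)
  case (Suc m)
  have "deriv (\<lambda>x::real. x) = (\<lambda>x. 1)" by (rule deriv_eqI) auto
  then show ?thesis using Suc by (simp add: times_differentiable_Suc times_differentiable_const)
qed simp

lemma times_differentiable_add:
  "times_differentiable n f \<Longrightarrow> times_differentiable n g \<Longrightarrow> times_differentiable n (\<lambda>x. f x + g x)"
proof (induction n arbitrary: f g)
  case (Suc n)
  have "deriv (\<lambda>x. f x + g x) = (\<lambda>x. deriv f x + deriv g x)"
    using Suc.prems by (intro deriv_eqI) (auto intro!: derivative_eq_intros times_differentiable_has_real_derivative)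
  then show ?case using Suc by (auto simp: times_differentiable_Suc)
qed simp

lemma times_differentiable_mult:
  "times_differentiable n f \<Longrightarrow> times_differentiable n g \<Longrightarrow> times_differentiable n (\<lambda>x. f x * g x)"
proof (induction n arbitrary: f g)
  case (Suc n)
  note f = Suc.prems(1) and g = Suc.prems(2)
  have "deriv (\<lambda>x. f x * g x) = (\<lambda>x. deriv f x * g x + f x * deriv g x)"
    using f g by (intro deriv_eqI) (auto intro!: derivative_eq_intros times_differentiable_has_real_derivative)
  moreover have "times_differentiable n (\<lambda>x. deriv f x * g x + f x * deriv g x)"
    using f g times_differentiable_SucD[OF f] times_differentiable_SucD[OF g]
    by (intro times_differentiable_add Suc.IH) (auto simp: times_differentiable_Suc)
  ultimately show ?case using f g by (auto simp: times_differentiable_Suc)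
qed simp

lemma times_differentiable_affine_comp:
  "times_differentiable n f \<Longrightarrow> times_differentiable n (\<lambda>x. f (a * x + b))"
proof (induction n arbitrary: f)
  case (Suc n)
  have D: "((\<lambda>x. f (a * x + b)) has_real_derivative a * deriv f (a * x + b)) (at x)" for x
    by (rule has_real_derivative_affine_comp[OF times_differentiable_has_real_derivative[OF Suc.prems]])
  then have "deriv (\<lambda>x. f (a * x + b)) = (\<lambda>x. a * deriv f (a * x + b))"
    by (rule deriv_eqI)
  moreover have "times_differentiable n (\<lambda>x. a * deriv f (a * x + b))"
    using Suc by (auto simp: times_differentiable_Suc intro!: times_differentiable_mult times_differentiable_const)
  ultimately show ?case
    using D by (auto simp: times_differentiable_Suc real_differentiable_def)
qed simp

lemma smooth_fun_const: "smooth_fun (\<lambda>x. c)"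
  by (simp add: smooth_fun_iff_times_differentiable times_differentiable_const)

lemma smooth_fun_ident: "smooth_fun (\<lambda>x. x)"
  by (simp add: smooth_fun_iff_times_differentiable times_differentiable_ident)

lemma smooth_fun_add: "smooth_fun f \<Longrightarrow> smooth_fun g \<Longrightarrow> smooth_fun (\<lambda>x. f x + g x)"
  by (simp add: smooth_fun_iff_times_differentiable times_differentiable_add)

lemma smooth_fun_mult: "smooth_fun f \<Longrightarrow> smooth_fun g \<Longrightarrow> smooth_fun (\<lambda>x. f x * g x)"
  by (simp add: smooth_fun_iff_times_differentiable times_differentiable_mult)

lemma smooth_fun_cmult: "smooth_fun f \<Longrightarrow> smooth_fun (\<lambda>x. c * f x)"
  by (rule smooth_fun_mult[OF smooth_fun_const])

lemma smooth_fun_diff: "smooth_fun f \<Longrightarrow> smooth_fun g \<Longrightarrow> smooth_fun (\<lambda>x. f x - g x)"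
  using smooth_fun_add[OF _ smooth_fun_cmult[of g "-1"], of f] by simp

lemma smooth_fun_affine_comp: "smooth_fun f \<Longrightarrow> smooth_fun (\<lambda>x. f (a * x + b))"
  by (simp add: smooth_fun_iff_times_differentiable times_differentiable_affine_comp)

lemma smooth_fun_deriv: "smooth_fun f \<Longrightarrow> smooth_fun (deriv f)"
  by (metis smooth_fun_iff_times_differentiable times_differentiable_Suc)

lemma smooth_fun_has_real_derivative: "smooth_fun f \<Longrightarrow> (f has_real_derivative deriv f x) (at x)"
  using times_differentiable_has_real_derivative smooth_fun_iff_times_differentiable by blast

lemma smooth_fun_continuous_on: "smooth_fun f \<Longrightarrow> continuous_on S f"
  by (meson DERIV_isCont continuous_at_imp_continuous_on smooth_fun_has_real_derivative)

lemma smooth_fun_antiderivative: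
  assumes "\<And>x. (f has_real_derivative g x) (at x)" and "smooth_fun g"
  shows "smooth_fun f"
proof -
  have "deriv f = g" using assms(1) by (rule deriv_eqI)
  then have "times_differentiable (Suc n) f" for n
    using assms by (auto simp: times_differentiable_Suc smooth_fun_iff_times_differentiable real_differentiable_def)
  then show ?thesis unfolding smooth_fun_iff_times_differentiable using times_differentiable_SucD by blast
qed

lemma smooth_fun_derivative_sequence:
  assumes "F 0 = f" and "\<And>n x. (F n has_real_derivative F (Suc n) x) (at x)"
  shows "smooth_fun f"
proof -
  have "(deriv ^^ n) f = F n" for n
    by (induction n) (simp_all add: assms deriv_eqI)
  then show ?thesis unfolding smooth_fun_def using assms(2) real_differentiable_def by metis
qed

lemma deriv_affine_comp:
  assumes "smooth_fun f"
  shows "deriv (\<lambda>x. c * f (a * x + b)) = (\<lambda>x. c * a * deriv f (a * x + b))"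
proof (rule deriv_eqI)
  fix x
  show "((\<lambda>x. c * f (a * x + b)) has_real_derivative c * a * deriv f (a * x + b)) (at x)"
    using has_real_derivative_affine_comp[OF smooth_fun_has_real_derivative[OF assms]]
    by (auto intro!: derivative_eq_intros simp: mult.assoc)
qed

lemma deriv_eq_on_open:
  assumes "open U" "x \<in> U" "\<And>y. y \<in> U \<Longrightarrow> f y = g y"
  shows "deriv f x = deriv g x"
  using assms by (intro deriv_cong_ev eventually_mono[OF eventually_nhds_in_open[OF assms(1,2)]]) auto

lemma has_real_derivative_const_imp_affine:
  fixes f :: "real \<Rightarrow> real"
  assumes "convex I" and f': "\<And>x. x \<in> I \<Longrightarrow> (f has_real_derivative f' x) (at x)"
    and const: "\<And>x. x \<in> I \<Longrightarrow> f' x = c" and "x \<in> I" "y \<in> I"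
  shows "f y = f x + c * (y - x)"
proof -
  have "\<exists>C. \<forall>z\<in>I. f z - c * z = C"
  proof (rule has_field_derivative_zero_constant[OF assms(1)])
    fix z assume "z \<in> I"
    then have "((\<lambda>z. f z - c * z) has_real_derivative f' z - c) (at z)"
      by (auto intro!: derivative_eq_intros f')
    then show "((\<lambda>z. f z - c * z) has_real_derivative 0) (at z within I)"
      using const[OF \<open>z \<in> I\<close>] by (simp add: has_field_derivative_at_within)
  qed
  then obtain C where "\<And>z. z \<in> I \<Longrightarrow> f z - c * z = C" by blast
  from this[OF assms(4)] this[OF assms(5)] show ?thesis by (simp add: algebra_simps)
qed

lemma has_real_derivative_ge_imp_increment_ge:
  fixes f :: "real \<Rightarrow> real"
  assumes f': "\<And>x. (f has_real_derivative f' x) (at x)" and "\<And>x. f' x \<ge> m" and "a \<le> b"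
  shows "f b - f a \<ge> m * (b - a)"
proof -
  have "f a - m * a \<le> f b - m * b"
  proof (rule DERIV_nonneg_imp_nondecreasing[OF \<open>a \<le> b\<close>])
    fix x
    have "((\<lambda>t. f t - m * t) has_real_derivative f' x - m) (at x)"
      using f'[of x] by (auto intro!: derivative_eq_intros)
    then show "\<exists>y. ((\<lambda>t. f t - m * t) has_real_derivative y) (at x) \<and> y \<ge> 0"
      using assms(2)[of x] by force
  qed
  then show ?thesis by (simp add: algebra_simps)
qed

lemma exists_antiderivative:
  fixes g :: "real \<Rightarrow> real"
  assumes "continuous_on UNIV g"
  obtains F where "\<And>x. (F has_real_derivative g x) (at x)"
proof -
  define F where "F x = integral {0..x} g - integral {x..0} g" for x
  have int: "g integrable_on {p..q}" for p q
    using assms by (intro integrable_continuous_interval) (auto intro: continuous_on_subset)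
  have "(F has_real_derivative g x) (at x)" for x
  proof -
    define a where "a = min x 0 - 1"
    define b where "b = max x 0 + 1"
    have F_eq: "F y = integral {a..y} g - integral {a..0} g" if "y \<in> {a<..<b}" for y
    proof (cases "y \<ge> 0")
      case True
      have "integral {a..0} g + integral {0..y} g = integral {a..y} g"
        using True by (intro Henstock_Kurzweil_Integration.integral_combine) (auto simp: a_def int)
      then show ?thesis using True by (cases "y = 0") (auto simp: F_def)
    next
      case False
      have "integral {a..y} g + integral {y..0} g = integral {a..0} g"
        using False that by (intro Henstock_Kurzweil_Integration.integral_combine) (auto simp: a_def int)
      then show ?thesis using False by (simp add: F_def)
    qed
    have "((\<lambda>y. integral {a..y} g) has_real_derivative g x) (at x within {a..b})"
      by (rule integral_has_real_derivative) (auto simp: a_def b_def intro: continuous_on_subset[OF assms])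
    then have "((\<lambda>y. integral {a..y} g) has_real_derivative g x) (at x)"
      using at_within_Icc_at[of a x b] by (simp add: a_def b_def)
    then have "((\<lambda>y. integral {a..y} g - integral {a..0} g) has_real_derivative g x) (at x)"
      by (auto intro!: derivative_eq_intros)
    then show ?thesis
      by (rule has_field_derivative_transform_within_open[where S="{a<..<b}"]) (auto simp: a_def b_def F_eq)
  qed
  then show ?thesis using that by blast
qed

lemma antiderivative_with_linear_ends:
  fixes p :: "real \<Rightarrow> real"
  assumes p: "smooth_fun p" and "0 \<le> a" "a \<le> b" "d > 0"
    and p_left: "\<And>t. t \<le> a \<Longrightarrow> p t = u" and p_right: "\<And>t. t \<ge> b \<Longrightarrow> p t = - d"
    and p_ge: "\<And>t. p t \<ge> - d" and balance: "d * (b - a) \<le> u * a"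
  obtains S f where "S \<ge> b" "smooth_fun f" "deriv f = p"
    "\<And>t. t \<le> 0 \<Longrightarrow> f t = u * t + c" "\<And>t. t \<ge> S \<Longrightarrow> f t = - d * (t - S) + c"
proof -
  obtain F where F: "\<And>t. (F has_real_derivative p t) (at t)"
    using exists_antiderivative[OF smooth_fun_continuous_on[OF p]] by blast
  define f where "f t = F t - F 0 + c" for t
  have f': "(f has_real_derivative p t) (at t)" for t
    unfolding f_def using F[of t] by (auto intro!: derivative_eq_intros)
  have f_left: "f t = f 0 + u * (t - 0)" if "t \<le> a" for t
    using that \<open>0 \<le> a\<close>
    by (intro has_real_derivative_const_imp_affine[of "{..a}" f p]) (auto intro: f' p_left)
  have f_right: "f t = f b + (- d) * (t - b)" if "t \<ge> b" for t
    using that by (intro has_real_derivative_const_imp_affine[of "{b..}" f p]) (auto intro: f' p_right)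
  have f_b: "f b \<ge> c"
    using has_real_derivative_ge_imp_increment_ge[OF f' p_ge \<open>a \<le> b\<close>] f_left[of a] balance
    by (simp add: f_def)
  define S where "S = b + (f b - c) / d"
  have "S \<ge> b" using f_b \<open>d > 0\<close> by (simp add: S_def)
  have "d * (S - b) = f b - c" using \<open>d > 0\<close> by (simp add: S_def)
  show ?thesis
  proof
    show "S \<ge> b" by fact
    show "smooth_fun f" using f' p by (rule smooth_fun_antiderivative)
    show "deriv f = p" using f' by (rule deriv_eqI)
    show "f t = u * t + c" if "t \<le> 0" for t using that \<open>0 \<le> a\<close> f_left[of t] by (simp add: f_def)
    show "f t = - d * (t - S) + c" if "t \<ge> S" for t
      using f_right[of t] that \<open>S \<ge> b\<close> \<open>d * (S - b) = f b - c\<close> by (simp add: algebra_simps)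
  qed
qed


section \<open>A smooth step function\<close>

lemma has_real_derivative_poly_inverse_times_exp:
  fixes Q :: "real poly" assumes x: "x > 0"
  shows "((\<lambda>x. poly Q (1 / x) * exp (- 1 / x)) has_real_derivative
      (poly Q (1 / x) - poly (pderiv Q) (1 / x)) * exp (- 1 / x) / x\<^sup>2) (at x)"
proof -
  have inv: "((\<lambda>x. 1 / x) has_real_derivative - 1 / x\<^sup>2) (at x)"
    using DERIV_inverse[of x] x by (simp add: inverse_eq_divide power2_eq_square)
  have "((\<lambda>x. poly Q (1 / x)) has_real_derivative poly (pderiv Q) (1 / x) * (- 1 / x\<^sup>2)) (at x)"
    by (rule DERIV_chain2[OF poly_DERIV inv])
  moreover have "((\<lambda>x. exp (- 1 / x)) has_real_derivative exp (- 1 / x) * (1 / x\<^sup>2)) (at x)"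
    using DERIV_chain2[OF DERIV_exp DERIV_minus[OF inv]] by simp
  ultimately show ?thesis
    using x by (auto dest: DERIV_mult simp: field_simps)
qed

fun flat_exp_poly :: "nat \<Rightarrow> real poly" where
  "flat_exp_poly 0 = 1"
| "flat_exp_poly (Suc n) = [:0, 0, 1:] * (flat_exp_poly n - pderiv (flat_exp_poly n))"

definition flat_exp :: "nat \<Rightarrow> real \<Rightarrow> real" where
  "flat_exp n x = (if x > 0 then poly (flat_exp_poly n) (1 / x) * exp (- 1 / x) else 0)"

lemma poly_times_exp_neg_tendsto_0: "((\<lambda>z. poly q z * exp (- z)) \<longlongrightarrow> 0) at_top"
  for q :: "real poly"
proof -
  have "((\<lambda>z. \<Sum>i\<le>degree q. coeff q i * (z ^ i / exp z)) \<longlongrightarrow> (\<Sum>i\<le>degree q. coeff q i * 0)) at_top"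
    by (intro tendsto_intros tendsto_power_div_exp_0)
  moreover have "(\<Sum>i\<le>degree q. coeff q i * (z ^ i / exp z)) = poly q z * exp (- z)" for z
    by (simp add: poly_altdef sum_distrib_right exp_minus divide_inverse mult.assoc)
  ultimately show ?thesis by simp
qed

lemma poly_inverse_times_exp_tendsto_0:
  "((\<lambda>y. poly q (1 / y) * exp (- 1 / y)) \<longlongrightarrow> 0) (at_right 0)" for q :: "real poly"
  using filterlim_compose[OF poly_times_exp_neg_tendsto_0 filterlim_inverse_at_top_right]
  by (simp add: o_def inverse_eq_divide)

lemma flat_exp_has_real_derivative: "(flat_exp n has_real_derivative flat_exp (Suc n) x) (at x)"
proof (cases x "0 :: real" rule: linorder_cases)
  case greater
  have "flat_exp (Suc n) x
      = (poly (flat_exp_poly n) (1 / x) - poly (pderiv (flat_exp_poly n)) (1 / x)) * exp (- 1 / x) / x\<^sup>2"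
    using greater unfolding flat_exp_def by (auto simp: poly_diff power2_eq_square field_simps)
  then have "((\<lambda>x. poly (flat_exp_poly n) (1 / x) * exp (- 1 / x))
      has_real_derivative flat_exp (Suc n) x) (at x)"
    using has_real_derivative_poly_inverse_times_exp[OF greater] by simp
  then show ?thesis
    by (rule has_field_derivative_transform_within_open[where S="{0<..}"])
       (use greater in \<open>simp_all add: flat_exp_def\<close>)
next
  case less
  have "(flat_exp n has_real_derivative 0) (at x)"
    by (rule has_field_derivative_transform_within_open[OF DERIV_const, where S="{..<0}"])
       (use less in \<open>auto simp: flat_exp_def\<close>)
  then show ?thesis using less by (simp add: flat_exp_def)
next
  case equal
  have "((\<lambda>y. poly (pCons 0 (flat_exp_poly n)) (1 / y) * exp (- 1 / y)) \<longlongrightarrow> 0) (at_right 0)"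
    by (rule poly_inverse_times_exp_tendsto_0)
  moreover have "\<forall>\<^sub>F y in at_right 0. poly (pCons 0 (flat_exp_poly n)) (1 / y) * exp (- 1 / y)
      = (flat_exp n y - flat_exp n 0) / (y - 0)"
    unfolding eventually_at_right_field flat_exp_def by (intro exI[of _ 1]) (auto simp: field_simps)
  ultimately have right: "((\<lambda>y. (flat_exp n y - flat_exp n 0) / (y - 0)) \<longlongrightarrow> 0) (at_right 0)"
    by (rule Lim_transform_eventually)
  have "\<forall>\<^sub>F y in at_left 0. 0 = (flat_exp n y - flat_exp n 0) / (y - 0)"
    unfolding eventually_at_left_field flat_exp_def by (intro exI[of _ "-1"]) auto
  then have left: "((\<lambda>y. (flat_exp n y - flat_exp n 0) / (y - 0)) \<longlongrightarrow> 0) (at_left 0)"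
    by (intro Lim_transform_eventually[OF tendsto_const])
  have "(flat_exp n has_real_derivative 0) (at 0)"
    unfolding has_field_derivative_iff using right left by (simp add: filterlim_at_split)
  then show ?thesis using equal by (simp add: flat_exp_def)
qed

lemma smooth_fun_flat_exp: "smooth_fun (flat_exp 0)"
  by (rule smooth_fun_derivative_sequence[of flat_exp]) (auto intro: flat_exp_has_real_derivative)

locale smooth_step =
  fixes H :: "real \<Rightarrow> real"
  assumes smooth: "smooth_fun H"
    and eq_0: "x \<le> 0 \<Longrightarrow> H x = 0"
    and eq_1: "x \<ge> 1 \<Longrightarrow> H x = 1"
    and nonneg: "0 \<le> H x"
    and le_1: "H x \<le> 1"

lemma smooth_bump_exists:
  obtains bump where "smooth_fun bump" "\<And>x. x \<le> 0 \<or> x \<ge> 1 \<Longrightarrow> bump x = 0"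
    "\<And>x. 0 < x \<Longrightarrow> x < 1 \<Longrightarrow> bump x > 0"
proof
  show "smooth_fun (\<lambda>x. flat_exp 0 x * flat_exp 0 ((-1) * x + 1))"
    by (intro smooth_fun_mult smooth_fun_affine_comp smooth_fun_flat_exp)
qed (auto simp: flat_exp_def)

lemma smooth_step_exists: obtains H where "smooth_step H"
proof -
  obtain bump where bump_smooth: "smooth_fun bump"
    and bump_outside: "\<And>x. x \<le> 0 \<or> x \<ge> 1 \<Longrightarrow> bump x = 0"
    and bump_pos: "\<And>x. 0 < x \<Longrightarrow> x < 1 \<Longrightarrow> bump x > 0"
    by (rule smooth_bump_exists) blast
  have bump_nonneg: "bump x \<ge> 0" for x
    using bump_outside[of x] bump_pos[of x] by linarith
  obtain B where B: "\<And>x. (B has_real_derivative bump x) (at x)"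
    using exists_antiderivative[OF smooth_fun_continuous_on[OF bump_smooth]] by blast
  have B_smooth: "smooth_fun B" using B bump_smooth by (rule smooth_fun_antiderivative)
  have B_mono: "B x \<le> B y" if "x \<le> y" for x y
    using has_real_derivative_ge_imp_increment_ge[OF B bump_nonneg that] by simp
  obtain z where "0 < z" "z < 1" "B 1 - B 0 = (1 - 0) * bump z"
    using MVT2[of 0 1 B bump, OF zero_less_one B] by blast
  then have B_01: "B 0 < B 1" using bump_pos[of z] by simp
  have B_left: "B x = B 0 + 0 * (x - 0)" if "x \<le> 0" for x
    using that by (intro has_real_derivative_const_imp_affine[of "{..0}" B bump]) (auto intro: B bump_outside)
  have B_right: "B x = B 1 + 0 * (x - 1)" if "x \<ge> 1" for x
    using that by (intro has_real_derivative_const_imp_affine[of "{1..}" B bump]) (auto intro: B bump_outside)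
  define H where "H x = (B x - B 0) / (B 1 - B 0)" for x
  show ?thesis
  proof (intro that, unfold_locales)
    show "smooth_fun H"
      unfolding H_def divide_inverse mult.commute[of _ "inverse _"]
      by (intro smooth_fun_cmult smooth_fun_diff B_smooth smooth_fun_const)
    show "H x = 0" if "x \<le> 0" for x using B_left[OF that] by (simp add: H_def)
    show "H x = 1" if "x \<ge> 1" for x using B_right[OF that] B_01 by (simp add: H_def)
    show "0 \<le> H x" for x
    proof -
      have "B 0 \<le> B x" using B_mono[of 0 x] B_left[of x] by (cases "0 \<le> x") auto
      then show ?thesis using B_01 by (simp add: H_def)
    qed
    show "H x \<le> 1" for x
    proof -
      have "B x \<le> B 1" using B_mono[of x 1] B_right[of x] by (cases "x \<le> 1") auto
      then show ?thesis using B_01 by (simp add: H_def)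
    qed
  qed
qed


section \<open>Bounding the length of a curve\<close>

text \<open>A majorant \<open>\<Phi>\<close> controls every chord of \<open>\<gamma>\<close>; unlike the supremum defining
  \<^const>\<open>curve_length\<close>, such bounds add up over adjacent intervals.\<close>
definition length_bounded_by :: "(real \<Rightarrow> 'a::metric_space) \<Rightarrow> real \<Rightarrow> real \<Rightarrow> real \<Rightarrow> bool" where
  "length_bounded_by \<gamma> a b V \<longleftrightarrow>
     (\<exists>\<Phi>. (\<forall>x y. a \<le> x \<longrightarrow> x \<le> y \<longrightarrow> y \<le> b \<longrightarrow> dist (\<gamma> x) (\<gamma> y) \<le> \<Phi> y - \<Phi> x)
        \<and> \<Phi> b - \<Phi> a \<le> V)"

lemma length_bounded_byI:
  assumes "\<And>x y. a \<le> x \<Longrightarrow> x \<le> y \<Longrightarrow> y \<le> b \<Longrightarrow> dist (\<gamma> x) (\<gamma> y) \<le> \<Phi> y - \<Phi> x"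
    and "\<Phi> b - \<Phi> a \<le> V"
  shows "length_bounded_by \<gamma> a b V"
  unfolding length_bounded_by_def using assms by blast

lemma curve_length_le_length_bound:
  assumes "length_bounded_by \<gamma> a b V"
  shows "curve_length \<gamma> a b \<le> ereal V"
proof -
  obtain \<Phi> where \<Phi>: "\<And>x y. a \<le> x \<Longrightarrow> x \<le> y \<Longrightarrow> y \<le> b \<Longrightarrow> dist (\<gamma> x) (\<gamma> y) \<le> \<Phi> y - \<Phi> x"
    and V: "\<Phi> b - \<Phi> a \<le> V"
    using assms unfolding length_bounded_by_def by blast
  show ?thesis unfolding curve_length_def
  proof (rule SUP_least)
    fix p assume "p \<in> {(n, t). t 0 = a \<and> t n = b \<and> (\<forall>i<n. t i \<le> t (Suc i))}"
    then obtain n t where p: "p = (n, t)" and t0: "t 0 = a" and tn: "t n = b"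
      and step: "\<And>i. i < n \<Longrightarrow> t i \<le> t (Suc i)" by blast
    have mono: "t i \<le> t j" if "i \<le> j" "j \<le> n" for i j
      using that
    proof (induction j)
      case (Suc j)
      then show ?case using step by (cases "i = Suc j") (auto intro: order_trans)
    qed simp
    have "(\<Sum>i<n. dist (\<gamma> (t i)) (\<gamma> (t (Suc i)))) \<le> (\<Sum>i<n. \<Phi> (t (Suc i)) - \<Phi> (t i))"
      using mono[of 0] mono[of _ n] step t0 tn by (intro sum_mono \<Phi>) auto
    also have "\<dots> = \<Phi> b - \<Phi> a"
      using sum_lessThan_telescope[of "\<lambda>i. \<Phi> (t i)" n] t0 tn by simp
    finally show "ereal (\<Sum>i<fst p. dist (\<gamma> (snd p i)) (\<gamma> (snd p (Suc i)))) \<le> ereal V"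
      using p V by simp
  qed
qed

lemma length_bounded_by_mono: "length_bounded_by \<gamma> a b V \<Longrightarrow> V \<le> V' \<Longrightarrow> length_bounded_by \<gamma> a b V'"
  unfolding length_bounded_by_def by (meson order_trans)

lemma length_bounded_by_append:
  assumes "a \<le> m" "m \<le> b" "length_bounded_by \<gamma> a m V\<^sub>1" "length_bounded_by \<gamma> m b V\<^sub>2"
  shows "length_bounded_by \<gamma> a b (V\<^sub>1 + V\<^sub>2)"
proof -
  obtain \<Phi>\<^sub>1 where \<Phi>\<^sub>1: "\<And>x y. a \<le> x \<Longrightarrow> x \<le> y \<Longrightarrow> y \<le> m \<Longrightarrow> dist (\<gamma> x) (\<gamma> y) \<le> \<Phi>\<^sub>1 y - \<Phi>\<^sub>1 x"
    and V\<^sub>1: "\<Phi>\<^sub>1 m - \<Phi>\<^sub>1 a \<le> V\<^sub>1"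
    using assms(3) unfolding length_bounded_by_def by blast
  obtain \<Phi>\<^sub>2 where \<Phi>\<^sub>2: "\<And>x y. m \<le> x \<Longrightarrow> x \<le> y \<Longrightarrow> y \<le> b \<Longrightarrow> dist (\<gamma> x) (\<gamma> y) \<le> \<Phi>\<^sub>2 y - \<Phi>\<^sub>2 x"
    and V\<^sub>2: "\<Phi>\<^sub>2 b - \<Phi>\<^sub>2 m \<le> V\<^sub>2"
    using assms(4) unfolding length_bounded_by_def by blast
  define \<Phi> where "\<Phi> x = (if x \<le> m then \<Phi>\<^sub>1 x else \<Phi>\<^sub>2 x - \<Phi>\<^sub>2 m + \<Phi>\<^sub>1 m)" for x
  show ?thesis
  proof (rule length_bounded_byI)
    fix x y assume xy: "a \<le> x" "x \<le> y" "y \<le> b"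
    consider "y \<le> m" | "x \<le> m" "m < y" | "m < x" by linarith
    then show "dist (\<gamma> x) (\<gamma> y) \<le> \<Phi> y - \<Phi> x"
    proof cases
      case 2
      have "dist (\<gamma> x) (\<gamma> y) \<le> dist (\<gamma> x) (\<gamma> m) + dist (\<gamma> m) (\<gamma> y)"
        by (rule dist_triangle)
      also have "\<dots> \<le> (\<Phi>\<^sub>1 m - \<Phi>\<^sub>1 x) + (\<Phi>\<^sub>2 y - \<Phi>\<^sub>2 m)"
        using 2 xy by (intro add_mono \<Phi>\<^sub>1 \<Phi>\<^sub>2) auto
      finally show ?thesis using 2 by (simp add: \<Phi>_def)
    qed (use xy \<Phi>\<^sub>1 \<Phi>\<^sub>2 in \<open>auto simp: \<Phi>_def\<close>)
  next
    show "\<Phi> b - \<Phi> a \<le> V\<^sub>1 + V\<^sub>2"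
      using V\<^sub>1 V\<^sub>2 assms(1,2) by (cases "b \<le> m") (auto simp: \<Phi>_def)
  qed
qed

lemma length_bounded_by_const:
  assumes "\<And>x. a \<le> x \<Longrightarrow> x \<le> b \<Longrightarrow> \<gamma> x = \<gamma> a"
  shows "length_bounded_by \<gamma> a b 0"
proof (rule length_bounded_byI[where \<Phi> = "\<lambda>x. 0"])
  fix x y assume "a \<le> x" "x \<le> y" "y \<le> b"
  then show "dist (\<gamma> x) (\<gamma> y) \<le> 0 - 0" using assms[of x] assms[of y] by simp
qed simp

lemma length_bounded_by_lipschitz:
  assumes "\<And>x y. a \<le> x \<Longrightarrow> x \<le> y \<Longrightarrow> y \<le> b \<Longrightarrow> dist (\<gamma> x) (\<gamma> y) \<le> L * (y - x)"
  shows "length_bounded_by \<gamma> a b (L * (b - a))"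
  by (rule length_bounded_byI[where \<Phi> = "\<lambda>x. L * x"]) (auto simp: right_diff_distrib dest: assms)

lemma length_bounded_by_reflect:
  assumes "length_bounded_by \<gamma> a b V" and "\<And>x y. dist (\<delta> x) (\<delta> y) = dist (\<gamma> (c - x)) (\<gamma> (c - y))"
  shows "length_bounded_by \<delta> (c - b) (c - a) V"
proof -
  obtain \<Phi> where \<Phi>: "\<And>x y. a \<le> x \<Longrightarrow> x \<le> y \<Longrightarrow> y \<le> b \<Longrightarrow> dist (\<gamma> x) (\<gamma> y) \<le> \<Phi> y - \<Phi> x"
    and V: "\<Phi> b - \<Phi> a \<le> V"
    using assms(1) unfolding length_bounded_by_def by blast
  show ?thesis
  proof (rule length_bounded_byI[where \<Phi> = "\<lambda>x. - \<Phi> (c - x)"])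
    fix x y assume "c - b \<le> x" "x \<le> y" "y \<le> c - a"
    then show "dist (\<delta> x) (\<delta> y) \<le> - \<Phi> (c - y) - - \<Phi> (c - x)"
      using \<Phi>[of "c - y" "c - x"] by (simp add: assms(2) dist_commute)
  qed (use V in simp)
qed

lemma length_bounded_by_affine_comp:
  assumes "length_bounded_by \<gamma> a b V" and "e > 0"
  shows "length_bounded_by (\<lambda>t. \<gamma> (e * t + k)) ((a - k) / e) ((b - k) / e) V"
proof -
  obtain \<Phi> where \<Phi>: "\<And>x y. a \<le> x \<Longrightarrow> x \<le> y \<Longrightarrow> y \<le> b \<Longrightarrow> dist (\<gamma> x) (\<gamma> y) \<le> \<Phi> y - \<Phi> x"
    and V: "\<Phi> b - \<Phi> a \<le> V"
    using assms(1) unfolding length_bounded_by_def by blast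
  show ?thesis
  proof (rule length_bounded_byI[where \<Phi> = "\<lambda>t. \<Phi> (e * t + k)"])
    fix x y assume "(a - k) / e \<le> x" "x \<le> y" "y \<le> (b - k) / e"
    then show "dist (\<gamma> (e * x + k)) (\<gamma> (e * y + k)) \<le> \<Phi> (e * y + k) - \<Phi> (e * x + k)"
      using \<open>e > 0\<close> by (intro \<Phi>) (auto simp: field_simps)
  qed (use V \<open>e > 0\<close> in simp)
qed


section \<open>Unit vectors in three-space\<close>

lemma vector3_diff: "(vector [a, b, c] :: real^3) - vector [a', b', c'] = vector [a - a', b - b', c - c']"
  by (auto simp: vec_eq_iff forall_3)

lemma vector3_scaleR: "r *\<^sub>R (vector [a, b, c] :: real^3) = vector [r * a, r * b, r * c]"
  by (auto simp: vec_eq_iff forall_3)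

lemma vector3_eq_0_iff: "(vector [a, b, c] :: real^3) = 0 \<longleftrightarrow> a = 0 \<and> b = 0 \<and> c = 0"
  by (auto simp: vec_eq_iff forall_3)

lemma norm_vector3: "norm (vector [a, b, c] :: real^3) = sqrt (a\<^sup>2 + b\<^sup>2 + c\<^sup>2)"
  by (simp add: norm_vec_def L2_set_def sum_3)

lemma has_vector_derivative_vector3:
  assumes "(a has_real_derivative a') (at t)" "(b has_real_derivative b') (at t)"
    "(c has_real_derivative c') (at t)"
  shows "((\<lambda>t. vector [a t, b t, c t] :: real^3) has_vector_derivative vector [a', b', c']) (at t)"
proof -
  have split: "vector [x, y, z] = x *\<^sub>R (vector [1, 0, 0] :: real^3) + y *\<^sub>R vector [0, 1, 0]
      + z *\<^sub>R vector [0, 0, 1]" for x y z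
    by (auto simp: vec_eq_iff forall_3)
  have "((\<lambda>t. a t *\<^sub>R (vector [1, 0, 0] :: real^3) + b t *\<^sub>R vector [0, 1, 0] + c t *\<^sub>R vector [0, 0, 1])
      has_vector_derivative
        a' *\<^sub>R (vector [1, 0, 0] :: real^3) + b' *\<^sub>R vector [0, 1, 0] + c' *\<^sub>R vector [0, 0, 1]) (at t)"
    using assms by (auto intro!: derivative_eq_intros)
  then show ?thesis by (simp only: split[symmetric])
qed

text \<open>Outside the unit ball, normalization is the nearest-point projection onto the ball,
  hence 1-Lipschitz.\<close>
lemma norm_sgn_diff_le:
  fixes a b :: "'a::real_inner"
  assumes "norm a \<ge> 1" "norm b \<ge> 1"
  shows "norm (sgn a - sgn b) \<le> norm (a - b)"
proof -
  define A B c where "A = norm a" and "B = norm b" and "c = inner a b"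
  have A: "A \<ge> 1" and B: "B \<ge> 1" using assms by (auto simp: A_def B_def)
  have cs: "c \<le> A * B" unfolding c_def A_def B_def by (rule norm_cauchy_schwarz)
  have norm_diff: "(norm (x - y))\<^sup>2 = (norm x)\<^sup>2 + (norm y)\<^sup>2 - 2 * inner x y" for x y :: 'a
    by (simp add: power2_norm_eq_inner inner_diff_left inner_diff_right inner_commute)
  have "a \<noteq> 0" "b \<noteq> 0" using assms by auto
  then have lhs: "(norm (sgn a - sgn b))\<^sup>2 = 2 - 2 * c / (A * B)"
    unfolding norm_diff by (simp add: norm_sgn sgn_div_norm A_def B_def c_def field_simps)
  have rhs: "(norm (a - b))\<^sup>2 = A\<^sup>2 + B\<^sup>2 - 2 * c"
    unfolding norm_diff A_def B_def c_def ..
  have AB: "A * B \<ge> 1" using A B by (metis mult_mono' mult_1 zero_le_one order_trans)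
  have "2 * c * (A * B - 1) \<le> 2 * (A * B) * (A * B - 1)"
    using cs AB by (intro mult_right_mono) auto
  also have "\<dots> \<le> A * B * (A\<^sup>2 + B\<^sup>2 - 2)"
  proof -
    have "0 \<le> A * B * (A - B)\<^sup>2" using A B by simp
    then show ?thesis by (simp add: power2_eq_square algebra_simps)
  qed
  finally have "(2 - 2 * c / (A * B)) * (A * B) \<le> (A\<^sup>2 + B\<^sup>2 - 2 * c) * (A * B)"
    using AB by (simp add: field_simps)
  then have "(norm (sgn a - sgn b))\<^sup>2 \<le> (norm (a - b))\<^sup>2"
    unfolding lhs rhs using AB by (simp add: mult_le_cancel_right)
  then show ?thesis by (simp add: power2_le_iff_abs_le)
qed

lemma dist_sgn_vector3_le:
  assumes "p * p' > 0"
  shows "dist (sgn (vector [p, q, r] :: real^3)) (sgn (vector [p', q', r']))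
    \<le> \<bar>q / p - q' / p'\<bar> + \<bar>r / p - r' / p'\<bar>"
proof -
  define v v' where "v = (vector [1, q / p, r / p] :: real^3)" and "v' = (vector [1, q' / p', r' / p'] :: real^3)"
  have "p \<noteq> 0" "p' \<noteq> 0" and same_sign: "sgn p = sgn p'"
    using assms by (auto simp: sgn_real_def zero_less_mult_iff)
  then have "vector [p, q, r] = p *\<^sub>R v" "vector [p', q', r'] = p' *\<^sub>R v'"
    by (auto simp: v_def v'_def vector3_scaleR)
  then have "dist (sgn (vector [p, q, r] :: real^3)) (sgn (vector [p', q', r']))
      = norm (sgn p *\<^sub>R (sgn v - sgn v'))"
    by (simp add: sgn_scaleR dist_norm same_sign scaleR_diff_right)
  also have "\<dots> = norm (sgn v - sgn v')"
    using \<open>p \<noteq> 0\<close> by (auto simp: sgn_real_def)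
  also have "\<dots> \<le> norm (v - v')"
    by (rule norm_sgn_diff_le) (auto simp: v_def v'_def norm_vector3)
  also have "\<dots> = sqrt ((q / p - q' / p')\<^sup>2 + (r / p - r' / p')\<^sup>2)"
    by (simp add: v_def v'_def vector3_diff norm_vector3)
  also have "\<dots> \<le> \<bar>q / p - q' / p'\<bar> + \<bar>r / p - r' / p'\<bar>"
    by (rule sqrt_sum_squares_le_sum_abs)
  finally show ?thesis .
qed

lemma sgn_vector3_arctan:
  assumes "e > 0"
  shows "sgn (vector [y, e, 0] :: real^3) = vector [sin (arctan (y / e)), cos (arctan (y / e)), 0]"
proof -
  define N where "N = sqrt (y\<^sup>2 + e\<^sup>2)"
  have N: "N > 0" using assms by (simp add: N_def add_nonneg_pos)
  have "sqrt (1 + (y / e)\<^sup>2) = N / e"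
    using assms by (simp add: N_def field_simps real_sqrt_divide)
  then have "sin (arctan (y / e)) = y / N" "cos (arctan (y / e)) = e / N"
    using assms N by (simp_all add: sin_arctan cos_arctan)
  then show ?thesis
    by (simp add: sgn_div_norm norm_vector3 vector3_scaleR N_def divide_inverse mult.commute)
qed

lemma dist_circle_le:
  "dist (vector [sin a, cos a, 0] :: real^3) (vector [sin b, cos b, 0]) \<le> \<bar>a - b\<bar>"
proof -
  define w z where "w = (a - b) / 2" and "z = (a + b) / 2"
  have "sin a - sin b = 2 * sin w * cos z" by (simp add: sin_diff_sin w_def z_def)
  moreover have "cos a - cos b = - (2 * sin w * sin z)"
  proof -
    have "(b - a) / 2 = - w" by (simp add: w_def field_simps)
    then show ?thesis using cos_diff_cos[of a b] by (simp add: z_def)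
  qed
  ultimately have "(sin a - sin b)\<^sup>2 + (cos a - cos b)\<^sup>2 = (2 * sin w)\<^sup>2 * ((cos z)\<^sup>2 + (sin z)\<^sup>2)"
    by algebra
  then have "(sin a - sin b)\<^sup>2 + (cos a - cos b)\<^sup>2 + 0\<^sup>2 = (2 * sin w)\<^sup>2"
    by (simp only: sin_cos_squared_add2 mult_1_right power_zero_numeral add_0_right)
  then have "dist (vector [sin a, cos a, 0] :: real^3) (vector [sin b, cos b, 0]) = 2 * \<bar>sin w\<bar>"
    by (simp only: dist_norm vector3_diff norm_vector3 real_sqrt_abs abs_mult diff_self)
  also have "\<dots> \<le> \<bar>a - b\<bar>" using abs_sin_x_le_abs_x[of w] by (simp add: w_def)
  finally show ?thesis .
qed

lemma dist_sgn_vector3_arctan_le: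
  assumes "e > 0"
  shows "dist (sgn (vector [y, e, 0] :: real^3)) (sgn (vector [y', e, 0]))
    \<le> \<bar>arctan (y / e) - arctan (y' / e)\<bar>"
  unfolding sgn_vector3_arctan[OF assms] by (rule dist_circle_le)

lemma dist_sgn_vector3_flip:
  "dist (sgn (vector [a, - b, c] :: real^3)) (sgn (vector [a', - b', c']))
    = dist (sgn (vector [a, b, c] :: real^3)) (sgn (vector [a', b', c']))"
  by (simp add: sgn_div_norm norm_vector3 vector3_scaleR dist_norm vector3_diff power2_commute)


section \<open>Holonomic curves and their tangent indicatrix\<close>

lemma holonomic_has_vector_derivative:
  assumes "smooth_fun f"
  shows "(holonomic f has_vector_derivative
    vector [deriv f t, deriv (deriv f) t, deriv (deriv (deriv f)) t]) (at t)"
  unfolding holonomic_def[abs_def]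
  using assms by (intro has_vector_derivative_vector3 smooth_fun_has_real_derivative smooth_fun_deriv)

lemma unit_tangent_holonomic:
  assumes "smooth_fun f"
  shows "unit_tangent (holonomic f) t
    = sgn (vector [deriv f t, deriv (deriv f) t, deriv (deriv (deriv f)) t])"
  by (simp add: unit_tangent_def sgn_div_norm vector_derivative_at[OF holonomic_has_vector_derivative[OF assms]])

lemma regular_curve_on_holonomic:
  assumes "smooth_fun f" "\<And>t. t \<in> {a..b} \<Longrightarrow> deriv f t \<noteq> 0 \<or> deriv (deriv f) t \<noteq> 0"
  shows "regular_curve_on (holonomic f) a b"
  unfolding regular_curve_on_def
  using assms vector_derivative_at[OF holonomic_has_vector_derivative[OF assms(1)]]
    differentiableI_vector[OF holonomic_has_vector_derivative[OF assms(1)]]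
  by (auto simp: vector3_eq_0_iff)

lemma smooth_fun_reflect: "smooth_fun f \<Longrightarrow> smooth_fun (\<lambda>t. - f (S - t))"
  using smooth_fun_cmult[OF smooth_fun_affine_comp, of f "- 1" "- 1" S] by simp

lemma deriv_reflect:
  assumes "smooth_fun f"
  shows "deriv (\<lambda>t. c * f (S - t)) = (\<lambda>t. - c * deriv f (S - t))"
  using deriv_affine_comp[OF assms, of c "- 1" S] by simp

lemma vector_derivative_holonomic_reflect:
  assumes f: "smooth_fun f"
  shows "vector_derivative (holonomic (\<lambda>t. - f (S - t))) (at t)
    = vector [deriv f (S - t), - deriv (deriv f) (S - t), deriv (deriv (deriv f)) (S - t)]"
proof -
  have "deriv (\<lambda>t. - f (S - t)) = (\<lambda>t. deriv f (S - t))"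
    using deriv_reflect[OF f, of "- 1" S] by simp
  moreover have "deriv (\<lambda>t. deriv f (S - t)) = (\<lambda>t. - deriv (deriv f) (S - t))"
    using deriv_reflect[OF smooth_fun_deriv[OF f], of 1 S] by simp
  moreover have "deriv (\<lambda>t. - deriv (deriv f) (S - t)) = (\<lambda>t. deriv (deriv (deriv f)) (S - t))"
    using deriv_reflect[OF smooth_fun_deriv[OF smooth_fun_deriv[OF f]], of "- 1" S] by simp
  ultimately show ?thesis
    using vector_derivative_at[OF holonomic_has_vector_derivative[OF smooth_fun_reflect[OF f]]] by simp
qed

lemma regular_curve_on_holonomic_reflect:
  assumes f: "smooth_fun f" and "regular_curve_on (holonomic f) a b"
  shows "regular_curve_on (holonomic (\<lambda>t. - f (S - t))) (S - b) (S - a)"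
  unfolding regular_curve_on_def
proof (intro ballI conjI)
  fix t assume "t \<in> {S - b..S - a}"
  then have "vector_derivative (holonomic f) (at (S - t)) \<noteq> 0"
    using assms(2) by (auto simp: regular_curve_on_def)
  then show "vector_derivative (holonomic (\<lambda>t. - f (S - t))) (at t) \<noteq> 0"
    by (simp add: vector_derivative_holonomic_reflect[OF f] vector3_eq_0_iff
        vector_derivative_at[OF holonomic_has_vector_derivative[OF f]])
  show "holonomic (\<lambda>t. - f (S - t)) differentiable (at t)"
    by (rule differentiableI_vector[OF holonomic_has_vector_derivative[OF smooth_fun_reflect[OF f]]])
qed

lemma length_bounded_by_unit_tangent_holonomic_reflect:
  assumes f: "smooth_fun f" and "length_bounded_by (unit_tangent (holonomic f)) a b V"
  shows "length_bounded_by (unit_tangent (holonomic (\<lambda>t. - f (S - t)))) (S - b) (S - a) V"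
  using assms(2)
  by (rule length_bounded_by_reflect)
     (simp add: unit_tangent_def vector_derivative_holonomic_reflect[OF f] dist_sgn_vector3_flip
        vector_derivative_at[OF holonomic_has_vector_derivative[OF f]] flip: sgn_div_norm)

lemma total_curvature_less_of_length_bound:
  assumes "length_bounded_by (unit_tangent \<gamma>) a b V" and "V < W"
  shows "total_curvature \<gamma> a b < ereal W"
proof -
  have "total_curvature \<gamma> a b \<le> ereal V"
    unfolding total_curvature_def using assms(1) by (rule curve_length_le_length_bound)
  also have "\<dots> < ereal W" using assms(2) by simp
  finally show ?thesis .
qed

lemma lipschitz_on_interval_of_continuous_deriv:
  fixes h :: "real \<Rightarrow> real"
  assumes "\<And>y. y \<in> {a..b} \<Longrightarrow> (h has_real_derivative h' y) (at y)" and "continuous_on {a..b} h'"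
  obtains K where "K \<ge> 0" "\<And>y y'. y \<in> {a..b} \<Longrightarrow> y' \<in> {a..b} \<Longrightarrow> \<bar>h y - h y'\<bar> \<le> K * \<bar>y - y'\<bar>"
proof -
  have "compact (h' ` {a..b})" by (rule compact_continuous_image[OF assms(2) compact_Icc])
  then obtain B where B: "\<And>y. y \<in> {a..b} \<Longrightarrow> \<bar>h' y\<bar> \<le> B"
    using compact_imp_bounded bounded_iff by (metis image_eqI real_norm_def)
  have "norm (h y - h y') \<le> max B 0 * norm (y - y')" if "y \<in> {a..b}" "y' \<in> {a..b}" for y y'
    using that by (intro field_differentiable_bound[where S="{a..b}" and f'=h'])
      (auto intro!: has_field_derivative_at_within assms(1) order_trans[OF B])
  then show ?thesis using that[of "max B 0"] by auto
qed

lemma lipschitz_on_interval_divide: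
  assumes f: "smooth_fun f" and g: "smooth_fun g" and nonzero: "\<And>y. y \<in> {a..b} \<Longrightarrow> g y \<noteq> 0"
  obtains K where "K \<ge> 0"
    "\<And>y y'. y \<in> {a..b} \<Longrightarrow> y' \<in> {a..b} \<Longrightarrow> \<bar>f y / g y - f y' / g y'\<bar> \<le> K * \<bar>y - y'\<bar>"
proof (rule lipschitz_on_interval_of_continuous_deriv)
  define q' where "q' y = (deriv f y * g y - f y * deriv g y) / (g y * g y)" for y
  show "((\<lambda>y. f y / g y) has_real_derivative q' y) (at y)" if "y \<in> {a..b}" for y
    unfolding q'_def using nonzero[OF that]
    by (intro DERIV_divide smooth_fun_has_real_derivative f g)
  show "continuous_on {a..b} q'"
    unfolding q'_def using nonzero
    by (intro continuous_intros smooth_fun_continuous_on smooth_fun_deriv f g) auto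
qed (use that in blast)

lemma continuous_nonvanishing_same_sign:
  fixes P :: "real \<Rightarrow> real"
  assumes "continuous_on {a..b} P" "\<And>y. y \<in> {a..b} \<Longrightarrow> P y \<noteq> 0" "x \<in> {a..b}" "y \<in> {a..b}"
  shows "P x * P y > 0"
proof (rule ccontr)
  assume "\<not> P x * P y > 0"
  then have "P x \<le> 0 \<and> 0 \<le> P y \<or> P y \<le> 0 \<and> 0 \<le> P x"
    by (auto simp: not_less mult_le_0_iff)
  moreover have "connected (P ` {a..b})"
    by (rule connected_continuous_image[OF assms(1)]) simp
  ultimately have "0 \<in> P ` {a..b}"
    using assms(3,4) unfolding connected_iff_interval by blast
  with assms(2) show False by auto
qed

definition scaled_tangent :: "(real \<Rightarrow> real) \<Rightarrow> real \<Rightarrow> real \<Rightarrow> real^3" where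
  "scaled_tangent P e y = sgn (vector [P y, e * deriv P y, e\<^sup>2 * deriv (deriv P) y])"

lemma unit_tangent_holonomic_scaled:
  assumes P: "smooth_fun P" and f: "smooth_fun f" and "deriv f = (\<lambda>t. P (e * t + k))"
  shows "unit_tangent (holonomic f) t = scaled_tangent P e (e * t + k)"
proof -
  have "deriv (deriv f) = (\<lambda>t. e * deriv P (e * t + k))"
    using deriv_affine_comp[OF P, of 1 e k] by (simp add: assms(3))
  moreover have "deriv (\<lambda>t. e * deriv P (e * t + k)) = (\<lambda>t. e\<^sup>2 * deriv (deriv P) (e * t + k))"
    using deriv_affine_comp[OF smooth_fun_deriv[OF P], of e e k] by (simp add: power2_eq_square)
  ultimately show ?thesis
    by (simp add: unit_tangent_holonomic[OF f] scaled_tangent_def assms(3))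
qed

lemma dist_scaled_tangent_le:
  assumes "P y * P y' > 0" "0 < e" "e \<le> 1"
  shows "dist (scaled_tangent P e y) (scaled_tangent P e y')
    \<le> e * (\<bar>deriv P y / P y - deriv P y' / P y'\<bar>
        + \<bar>deriv (deriv P) y / P y - deriv (deriv P) y' / P y'\<bar>)"
proof -
  define q\<^sub>1 q\<^sub>2 where "q\<^sub>1 = \<bar>deriv P y / P y - deriv P y' / P y'\<bar>"
    and "q\<^sub>2 = \<bar>deriv (deriv P) y / P y - deriv (deriv P) y' / P y'\<bar>"
  have "dist (scaled_tangent P e y) (scaled_tangent P e y')
      \<le> \<bar>e * deriv P y / P y - e * deriv P y' / P y'\<bar>
        + \<bar>e\<^sup>2 * deriv (deriv P) y / P y - e\<^sup>2 * deriv (deriv P) y' / P y'\<bar>"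
    unfolding scaled_tangent_def using assms(1) by (rule dist_sgn_vector3_le)
  also have "\<dots> = e * q\<^sub>1 + e\<^sup>2 * q\<^sub>2"
    using assms(2) by (simp add: q\<^sub>1_def q\<^sub>2_def abs_mult flip: right_diff_distrib times_divide_eq_right)
  also have "\<dots> \<le> e * q\<^sub>1 + e * q\<^sub>2"
    using assms(2,3) by (simp add: q\<^sub>2_def power2_eq_square mult_right_mono mult_left_le)
  finally show ?thesis by (simp add: q\<^sub>1_def q\<^sub>2_def distrib_left)
qed

lemma length_bounded_by_scaled_tangent:
  assumes P: "smooth_fun P" and nonzero: "\<And>y. y \<in> {a..b} \<Longrightarrow> P y \<noteq> 0" and "a \<le> b"
  obtains K where "K \<ge> 0" "\<And>e. 0 < e \<Longrightarrow> e \<le> 1 \<Longrightarrow> length_bounded_by (scaled_tangent P e) a b (e * K)"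
proof -
  obtain K\<^sub>1 where K\<^sub>1: "K\<^sub>1 \<ge> 0"
    "\<And>y y'. y \<in> {a..b} \<Longrightarrow> y' \<in> {a..b} \<Longrightarrow> \<bar>deriv P y / P y - deriv P y' / P y'\<bar> \<le> K\<^sub>1 * \<bar>y - y'\<bar>"
    using lipschitz_on_interval_divide[OF smooth_fun_deriv[OF P] P nonzero] by blast
  obtain K\<^sub>2 where K\<^sub>2: "K\<^sub>2 \<ge> 0" "\<And>y y'. y \<in> {a..b} \<Longrightarrow> y' \<in> {a..b} \<Longrightarrow>
      \<bar>deriv (deriv P) y / P y - deriv (deriv P) y' / P y'\<bar> \<le> K\<^sub>2 * \<bar>y - y'\<bar>"
    using lipschitz_on_interval_divide[OF smooth_fun_deriv[OF smooth_fun_deriv[OF P]] P nonzero] by blast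
  show ?thesis
  proof (rule that[of "(K\<^sub>1 + K\<^sub>2) * (b - a)"])
    show "(K\<^sub>1 + K\<^sub>2) * (b - a) \<ge> 0" using K\<^sub>1 K\<^sub>2 \<open>a \<le> b\<close> by simp
    fix e :: real assume e: "0 < e" "e \<le> 1"
    have "length_bounded_by (scaled_tangent P e) a b (e * (K\<^sub>1 + K\<^sub>2) * (b - a))"
    proof (rule length_bounded_by_lipschitz)
      fix y y' assume yy': "a \<le> y" "y \<le> y'" "y' \<le> b"
      have "P y * P y' > 0"
        using yy' nonzero by (intro continuous_nonvanishing_same_sign smooth_fun_continuous_on P) auto
      then have "dist (scaled_tangent P e y) (scaled_tangent P e y')
          \<le> e * (\<bar>deriv P y / P y - deriv P y' / P y'\<bar>
              + \<bar>deriv (deriv P) y / P y - deriv (deriv P) y' / P y'\<bar>)"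
        using e by (rule dist_scaled_tangent_le)
      also have "\<dots> \<le> e * (K\<^sub>1 * \<bar>y - y'\<bar> + K\<^sub>2 * \<bar>y - y'\<bar>)"
        using K\<^sub>1(2)[of y y'] K\<^sub>2(2)[of y y'] yy' e by (intro mult_left_mono add_mono) auto
      finally show "dist (scaled_tangent P e y) (scaled_tangent P e y') \<le> e * (K\<^sub>1 + K\<^sub>2) * (y' - y)"
        using yy' by (simp add: algebra_simps)
    qed
    then show "length_bounded_by (scaled_tangent P e) a b (e * ((K\<^sub>1 + K\<^sub>2) * (b - a)))"
      by (simp add: mult.assoc)
  qed
qed


section \<open>The velocity profile\<close>

locale velocity_profile = smooth_step +
  fixes u d :: real
  assumes u_pos: "u > 0" and d_pos: "d > 0"
begin

definition profile :: "real \<Rightarrow> real" where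
  "profile y = - y + (u + y) * H ((- 2 / u) * y + (- 1)) - (d - y) * H ((2 / d) * y + (- 1))"

lemma smooth_fun_profile: "smooth_fun profile"
proof -
  have "smooth_fun (\<lambda>y. (- 1) * y + (u + y) * H ((- 2 / u) * y + (- 1)) - (d - y) * H ((2 / d) * y + (- 1)))"
    by (intro smooth_fun_diff smooth_fun_add smooth_fun_mult smooth_fun_const smooth_fun_ident
        smooth_fun_affine_comp smooth)
  then show ?thesis unfolding profile_def[abs_def] by simp
qed

lemma profile_nonpos:
  assumes "y \<le> 0"
  shows "profile y = (1 - H ((- 2 / u) * y + (- 1))) * (- y) + H ((- 2 / u) * y + (- 1)) * u"
proof -
  have "(2 / d) * y \<le> 0" using assms d_pos by (simp add: divide_nonpos_pos)
  then have "(2 / d) * y + (- 1) \<le> 0" by linarith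
  then show ?thesis by (simp add: profile_def eq_0 algebra_simps)
qed

lemma profile_nonneg:
  assumes "y \<ge> 0"
  shows "profile y = - ((1 - H ((2 / d) * y + (- 1))) * y + H ((2 / d) * y + (- 1)) * d)"
proof -
  have "(- 2 / u) * y = - (2 * y / u)" by simp
  moreover have "2 * y / u \<ge> 0" using assms u_pos by simp
  ultimately have "(- 2 / u) * y + (- 1) \<le> 0" by linarith
  then show ?thesis by (simp add: profile_def eq_0 algebra_simps)
qed

lemma profile_left: "y \<le> - u \<Longrightarrow> profile y = u"
  using u_pos by (simp add: profile_nonpos eq_1 field_simps)

lemma profile_right: "y \<ge> d \<Longrightarrow> profile y = - d"
  using d_pos by (simp add: profile_nonneg eq_1 field_simps)

lemma profile_middle:
  assumes "- u / 2 \<le> y" "y \<le> d / 2"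
  shows "profile y = - y"
proof (cases "y \<le> 0")
  case True
  then have "(- 2 / u) * y + (- 1) \<le> 0" using assms u_pos by (simp add: field_simps)
  then show ?thesis using True by (simp add: profile_nonpos eq_0)
next
  case False
  then have "(2 / d) * y + (- 1) \<le> 0" using assms d_pos by (simp add: field_simps)
  then show ?thesis using False by (simp add: profile_nonneg eq_0)
qed

lemma profile_pos:
  assumes "y < 0"
  shows "profile y > 0"
proof -
  define h where "h = H ((- 2 / u) * y + (- 1))"
  have h: "0 \<le> h" "h \<le> 1" by (simp_all add: h_def nonneg le_1)
  have "(1 - h) * (- y) + h * u > 0"
  proof (cases "h = 1")
    case True
    then show ?thesis using u_pos by simp
  next
    case False
    then have "(1 - h) * (- y) > 0" using h assms by (intro mult_pos_pos) auto
    moreover have "h * u \<ge> 0" using h u_pos by simp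
    ultimately show ?thesis by linarith
  qed
  then show ?thesis using assms by (simp add: profile_nonpos h_def)
qed

lemma profile_neg:
  assumes "y > 0"
  shows "profile y < 0"
proof -
  define h where "h = H ((2 / d) * y + (- 1))"
  have h: "0 \<le> h" "h \<le> 1" by (simp_all add: h_def nonneg le_1)
  have "(1 - h) * y + h * d > 0"
  proof (cases "h = 1")
    case True
    then show ?thesis using d_pos by simp
  next
    case False
    then have "(1 - h) * y > 0" using h assms by (intro mult_pos_pos) auto
    moreover have "h * d \<ge> 0" using h d_pos by simp
    ultimately show ?thesis by linarith
  qed
  then show ?thesis using assms by (simp add: profile_nonneg h_def)
qed

lemma profile_le: "profile y \<le> u"
proof (cases "y \<le> 0")
  case True
  define h where "h = H ((- 2 / u) * y + (- 1))"
  have h: "0 \<le> h" "h \<le> 1" by (simp_all add: h_def nonneg le_1)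
  show ?thesis
  proof (cases "y \<le> - u")
    case False
    then have "(1 - h) * (- y) \<le> (1 - h) * u" using h by (intro mult_left_mono) auto
    then show ?thesis using True by (simp add: profile_nonpos h_def algebra_simps)
  qed (simp add: profile_left)
next
  case False
  then show ?thesis using profile_neg[of y] u_pos by simp
qed

lemma profile_ge: "- d \<le> profile y"
proof (cases "y \<ge> 0")
  case True
  define h where "h = H ((2 / d) * y + (- 1))"
  have h: "0 \<le> h" "h \<le> 1" by (simp_all add: h_def nonneg le_1)
  show ?thesis
  proof (cases "y \<ge> d")
    case False
    then have "(1 - h) * y \<le> (1 - h) * d" using h by (intro mult_left_mono) auto
    then show ?thesis using True by (simp add: profile_nonneg h_def algebra_simps)
  qed (simp add: profile_right)
next
  case False
  then show ?thesis using profile_pos[of y] d_pos by simp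
qed

lemma deriv_profile_middle:
  assumes "y \<in> {- u / 2 <..< d / 2}"
  shows "deriv profile y = - 1" and "deriv (deriv profile) y = 0"
proof -
  have D1: "deriv profile z = - 1" if "z \<in> {- u / 2 <..< d / 2}" for z
    using deriv_eq_on_open[of "{- u / 2 <..< d / 2}" z profile "\<lambda>z. - z"] that
    by (simp add: profile_middle)
  then show "deriv profile y = - 1" using assms .
  show "deriv (deriv profile) y = 0"
    using deriv_eq_on_open[of "{- u / 2 <..< d / 2}" y "deriv profile" "\<lambda>_. - 1"] assms D1
    by simp
qed

lemma deriv_profile_outside:
  assumes "y < - u \<or> y > d"
  shows "deriv profile y = 0" and "deriv (deriv profile) y = 0"
proof -
  obtain U c where U: "open U" "y \<in> U" and const: "\<And>z. z \<in> U \<Longrightarrow> profile z = c"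
    using assms profile_left profile_right
    by (elim disjE; intro that[of "{..< - u}"] that[of "{d <..}"]) auto
  have D1: "deriv profile z = 0" if "z \<in> U" for z
    using deriv_eq_on_open[OF U(1) that, of profile "\<lambda>_. c"] const by simp
  then show "deriv profile y = 0" using U by simp
  show "deriv (deriv profile) y = 0"
    using deriv_eq_on_open[OF U, of "deriv profile" "\<lambda>_. 0"] D1 by simp
qed

lemma profile_eq_0_iff: "profile y = 0 \<longleftrightarrow> y = 0"
  using profile_pos[of y] profile_neg[of y] profile_middle[of 0] u_pos d_pos
  by (cases y "0::real" rule: linorder_cases) auto

lemma scaled_tangent_profile_middle:
  assumes "y \<in> {- u / 2 <..< d / 2}"
  shows "scaled_tangent profile e y = - sgn (vector [y, e, 0] :: real^3)"
proof -
  have "vector [profile y, e * deriv profile y, e\<^sup>2 * deriv (deriv profile) y] = - (vector [y, e, 0] :: real^3)"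
    using assms by (auto simp: profile_middle deriv_profile_middle vec_eq_iff forall_3)
  then show ?thesis by (simp add: scaled_tangent_def sgn_minus)
qed

lemma scaled_tangent_profile_left: "y < - u \<Longrightarrow> scaled_tangent profile e y = sgn (vector [u, 0, 0])"
  by (simp add: scaled_tangent_def profile_left deriv_profile_outside)

lemma scaled_tangent_profile_right: "y > d \<Longrightarrow> scaled_tangent profile e y = sgn (vector [- d, 0, 0])"
  by (simp add: scaled_tangent_def profile_right deriv_profile_outside)

lemma length_bounded_by_scaled_tangent_profile_middle:
  assumes "e > 0" "0 < r" "r < u / 2" "r < d / 2"
  shows "length_bounded_by (scaled_tangent profile e) (- r) r (2 * arctan (r / e))"
proof (rule length_bounded_byI[where \<Phi> = "\<lambda>y. arctan (y / e)"])
  fix y y' assume yy': "- r \<le> y" "y \<le> y'" "y' \<le> r"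
  then have "dist (scaled_tangent profile e y) (scaled_tangent profile e y')
      = dist (sgn (vector [y, e, 0] :: real^3)) (sgn (vector [y', e, 0]))"
    using assms by (simp add: scaled_tangent_profile_middle dist_minus)
  also have "\<dots> \<le> \<bar>arctan (y / e) - arctan (y' / e)\<bar>"
    by (rule dist_sgn_vector3_arctan_le[OF \<open>e > 0\<close>])
  also have "\<dots> = arctan (y' / e) - arctan (y / e)"
    using yy' \<open>e > 0\<close> by (simp add: arctan_le_iff divide_right_mono)
  finally show "dist (scaled_tangent profile e y) (scaled_tangent profile e y')
      \<le> arctan (y' / e) - arctan (y / e)" .
qed (simp add: arctan_minus)

lemma length_bounded_by_scaled_tangent_profile:
  assumes "\<alpha> > 0"
  obtains e where "0 < e" "e \<le> 1"
    "\<And>A B. A \<le> - (u + 1) \<Longrightarrow> d + 1 \<le> B \<Longrightarrow> length_bounded_by (scaled_tangent profile e) A B (pi + \<alpha>)"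
proof -
  define r where "r = min u d / 4"
  have r: "0 < r" "r < u / 2" "r < d / 2" using u_pos d_pos by (auto simp: r_def)
  obtain K\<^sub>1 where K\<^sub>1: "K\<^sub>1 \<ge> 0"
    "\<And>e. 0 < e \<Longrightarrow> e \<le> 1 \<Longrightarrow> length_bounded_by (scaled_tangent profile e) (- (u + 1)) (- r) (e * K\<^sub>1)"
    using length_bounded_by_scaled_tangent[OF smooth_fun_profile, of "- (u + 1)" "- r"] r u_pos
    by (auto simp: profile_eq_0_iff)
  obtain K\<^sub>2 where K\<^sub>2: "K\<^sub>2 \<ge> 0"
    "\<And>e. 0 < e \<Longrightarrow> e \<le> 1 \<Longrightarrow> length_bounded_by (scaled_tangent profile e) r (d + 1) (e * K\<^sub>2)"
    using length_bounded_by_scaled_tangent[OF smooth_fun_profile, of r "d + 1"] r d_pos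
    by (auto simp: profile_eq_0_iff)
  define e where "e = min 1 (\<alpha> / (K\<^sub>1 + K\<^sub>2 + 1))"
  have e: "0 < e" "e \<le> 1" using assms K\<^sub>1 K\<^sub>2 by (auto simp: e_def)
  have "e * (K\<^sub>1 + K\<^sub>2 + 1) \<le> \<alpha>"
    using K\<^sub>1 K\<^sub>2 by (simp add: e_def min_le_iff_disj pos_le_divide_eq[symmetric])
  then have small: "e * K\<^sub>1 + e * K\<^sub>2 \<le> \<alpha>" using e by (simp add: algebra_simps)
  show ?thesis
  proof (rule that[OF e])
    fix A B assume A: "A \<le> - (u + 1)" and B: "d + 1 \<le> B"
    have left: "length_bounded_by (scaled_tangent profile e) A (- (u + 1)) 0"
      using A by (intro length_bounded_by_const) (simp add: scaled_tangent_profile_left)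
    have right: "length_bounded_by (scaled_tangent profile e) (d + 1) B 0"
      using d_pos by (intro length_bounded_by_const) (simp add: scaled_tangent_profile_right)
    have "length_bounded_by (scaled_tangent profile e) A B
        (0 + e * K\<^sub>1 + 2 * arctan (r / e) + e * K\<^sub>2 + 0)"
      using A B r u_pos d_pos
      by (intro length_bounded_by_append[OF _ _ _ right] length_bounded_by_append[OF _ _ _ K\<^sub>2(2)]
          length_bounded_by_append[OF _ _ _ length_bounded_by_scaled_tangent_profile_middle]
          length_bounded_by_append[OF _ _ left K\<^sub>1(2)] e) auto
    moreover have "0 + e * K\<^sub>1 + 2 * arctan (r / e) + e * K\<^sub>2 + 0 \<le> pi + \<alpha>"
      using arctan_ubound[of "r / e"] small by linarith
    ultimately show "length_bounded_by (scaled_tangent profile e) A B (pi + \<alpha>)"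
      by (rule length_bounded_by_mono)
  qed
qed

lemma profile_or_deriv_nonzero: "profile y \<noteq> 0 \<or> deriv profile y \<noteq> 0"
  using profile_eq_0_iff[of y] deriv_profile_middle(1)[of 0] u_pos d_pos by auto

lemma scaled_profile_antiderivative:
  assumes "e > 0"
  obtains S f k where "S > 0" "k \<le> - (u + 1)" "d + 1 \<le> e * S + k" "smooth_fun f"
    "deriv f = (\<lambda>t. profile (e * t + k))"
    "\<And>t. t \<le> 0 \<Longrightarrow> f t = u * t + c" "\<And>t. t \<ge> S \<Longrightarrow> f t = - d * (t - S) + c"
proof -
  \<comment> \<open>\<open>k\<close> makes the slope \<open>u\<close> last long enough (\<open>d * (b - a) \<le> u * a\<close>) for \<open>f\<close> to return to \<open>c\<close>.\<close>
  define k where "k = - (u + 1 + d * (u + d + 1) / u)"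
  define a b where "a = (- u - k) / e" and "b = (d + 1 - k) / e"
  define p where "p t = profile (e * t + k)" for t
  have k: "k \<le> - (u + 1)" using u_pos d_pos by (simp add: k_def)
  have ab: "0 \<le> a" "a \<le> b" "d * (b - a) \<le> u * a"
    using assms u_pos d_pos by (auto simp: a_def b_def k_def field_simps)
  have p_left: "p t = u" if "t \<le> a" for t
    unfolding p_def by (rule profile_left) (use that assms in \<open>simp add: a_def field_simps\<close>)
  have p_right: "p t = - d" if "t \<ge> b" for t
    unfolding p_def by (rule profile_right) (use that assms in \<open>simp add: b_def field_simps\<close>)
  have p: "smooth_fun p"
    unfolding p_def[abs_def] by (rule smooth_fun_affine_comp[OF smooth_fun_profile])
  have p_ge: "p t \<ge> - d" for t by (simp add: p_def profile_ge)
  obtain S f where S: "S \<ge> b" and f: "smooth_fun f" "deriv f = p"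
    "\<And>t. t \<le> 0 \<Longrightarrow> f t = u * t + c" "\<And>t. t \<ge> S \<Longrightarrow> f t = - d * (t - S) + c"
    using antiderivative_with_linear_ends[OF p ab(1,2) d_pos p_left p_right p_ge ab(3), of c] by blast
  show ?thesis
  proof (rule that[OF _ k _ f(1) _ f(3,4)])
    have "b > 0" unfolding b_def using assms k d_pos u_pos by (intro divide_pos_pos) auto
    then show "S > 0" using S by linarith
    have "e * b \<le> e * S" using S assms by simp
    moreover have "e * b + k = d + 1" using assms by (simp add: b_def)
    ultimately show "d + 1 \<le> e * S + k" by linarith
    show "deriv f = (\<lambda>t. profile (e * t + k))" using f(2) by (simp add: p_def[abs_def])
  qed
qed

lemma transition_function:
  assumes "s > 0" "\<alpha> > 0"
  obtains S f where "S > 0" "smooth_fun f"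
    "\<And>t. t \<le> 0 \<Longrightarrow> f t = u * t + c" "\<And>t. t \<ge> S \<Longrightarrow> f t = - d * (t - S) + c"
    "\<And>t. \<bar>deriv f t\<bar> \<le> max u d" "regular_curve_on (holonomic f) (- s) (S + s)"
    "length_bounded_by (unit_tangent (holonomic f)) (- s) (S + s) (pi + \<alpha>)"
proof -
  obtain e where e: "0 < e" "e \<le> 1" and indicatrix: "\<And>A B. A \<le> - (u + 1) \<Longrightarrow> d + 1 \<le> B \<Longrightarrow>
      length_bounded_by (scaled_tangent profile e) A B (pi + \<alpha>)"
    using length_bounded_by_scaled_tangent_profile[OF assms(2)] by blast
  obtain S f k where S: "S > 0" and k: "k \<le> - (u + 1)" "d + 1 \<le> e * S + k" and f: "smooth_fun f"
    and f': "deriv f = (\<lambda>t. profile (e * t + k))"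
    and f_ends: "\<And>t. t \<le> 0 \<Longrightarrow> f t = u * t + c" "\<And>t. t \<ge> S \<Longrightarrow> f t = - d * (t - S) + c"
    by (rule scaled_profile_antiderivative[OF e(1), where c = c]) blast
  have f'': "deriv (\<lambda>t. profile (e * t + k)) = (\<lambda>t. e * deriv profile (e * t + k))"
    using deriv_affine_comp[OF smooth_fun_profile, of 1 e k] by simp
  have tangent: "unit_tangent (holonomic f) = (\<lambda>t. scaled_tangent profile e (e * t + k))"
  proof
    show "unit_tangent (holonomic f) t = scaled_tangent profile e (e * t + k)" for t
      by (rule unit_tangent_holonomic_scaled[OF smooth_fun_profile f f'])
  qed
  have es: "e * s > 0" using e \<open>s > 0\<close> by simp
  have "length_bounded_by (\<lambda>t. scaled_tangent profile e (e * t + k))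
      ((e * (- s) + k - k) / e) ((e * (S + s) + k - k) / e) (pi + \<alpha>)"
    by (rule length_bounded_by_affine_comp[OF indicatrix e(1)]) (use k es in \<open>auto simp: algebra_simps\<close>)
  then have "length_bounded_by (unit_tangent (holonomic f)) (- s) (S + s) (pi + \<alpha>)"
    using e by (simp add: tangent)
  moreover have "\<bar>deriv f t\<bar> \<le> max u d" for t
    using profile_le[of "e * t + k"] profile_ge[of "e * t + k"] by (simp add: f')
  moreover have "regular_curve_on (holonomic f) (- s) (S + s)"
    using profile_or_deriv_nonzero e by (intro regular_curve_on_holonomic f) (auto simp: f' f'')
  ultimately show ?thesis using that S f f_ends by blast
qed
end

theorem lemma6p4:
  fixes c u d s \<alpha> :: real
  assumes "c > 0" "u > 0" "d > 0" "s > 0" "\<alpha> > 0"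
  shows "\<exists>S f g. S > 0 \<and> smooth_fun f \<and> smooth_fun g
    \<and> (\<forall>t\<in>{-s..0}. f t = u * t + c \<and> g t = - d * t - c)
    \<and> (\<forall>t\<in>{S..S+s}. f t = - d * (t - S) + c \<and> g t = u * (t - S) - c)
    \<and> (\<forall>t\<in>{-s..S+s}. \<bar>deriv f t\<bar> \<le> max u d \<and> \<bar>deriv g t\<bar> \<le> max u d)
    \<and> regular_curve_on (holonomic f) (-s) (S+s) \<and> regular_curve_on (holonomic g) (-s) (S+s)
    \<and> total_curvature (holonomic f) (-s) (S+s) < ereal (pi + \<alpha>)
    \<and> total_curvature (holonomic g) (-s) (S+s) < ereal (pi + \<alpha>)"
proof -
  obtain H where "smooth_step H" by (rule smooth_step_exists)
  then interpret velocity_profile H u d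
    using assms(2,3) by (intro velocity_profile.intro velocity_profile_axioms.intro)
  obtain S f where "S > 0" and f: "smooth_fun f"
    and f_left: "\<And>t. t \<le> 0 \<Longrightarrow> f t = u * t + c" and f_right: "\<And>t. t \<ge> S \<Longrightarrow> f t = - d * (t - S) + c"
    and f_slope: "\<And>t. \<bar>deriv f t\<bar> \<le> max u d" and f_regular: "regular_curve_on (holonomic f) (- s) (S + s)"
    and f_length: "length_bounded_by (unit_tangent (holonomic f)) (- s) (S + s) (pi + \<alpha> / 2)"
    using assms(4) half_gt_zero[OF assms(5)] by (rule transition_function[where c = c]) blast
  define g where "g t = - f (S - t)" for t
  have "smooth_fun g" using smooth_fun_reflect[OF f] by (simp add: g_def[abs_def])
  moreover have "deriv g t = deriv f (S - t)" for t
    using deriv_reflect[OF f, of "- 1" S] by (simp add: g_def[abs_def])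
  moreover have "regular_curve_on (holonomic g) (- s) (S + s)"
    using regular_curve_on_holonomic_reflect[OF f f_regular, of S] by (simp add: g_def[abs_def])
  moreover have "length_bounded_by (unit_tangent (holonomic g)) (- s) (S + s) (pi + \<alpha> / 2)"
    using length_bounded_by_unit_tangent_holonomic_reflect[OF f f_length, of S] by (simp add: g_def[abs_def])
  moreover have "f t = u * t + c \<and> g t = - d * t - c" if "t \<le> 0" for t
    using f_left[OF that] f_right[of "S - t"] that by (simp add: g_def algebra_simps)
  moreover have "f t = - d * (t - S) + c \<and> g t = u * (t - S) - c" if "t \<ge> S" for t
    using f_right[OF that] f_left[of "S - t"] that by (simp add: g_def algebra_simps)
  moreover have "pi + \<alpha> / 2 < pi + \<alpha>" using \<open>\<alpha> > 0\<close> by simp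
  ultimately show ?thesis
    using \<open>S > 0\<close> f f_slope f_regular f_length
    by (intro exI[of _ S] exI[of _ f] exI[of _ g]) (auto intro: total_curvature_less_of_length_bound)
qed

end
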